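(* Let $G$ be a locally compact, compactly generated group and let $N$ be a compact normal subgroup of $G$. Then $\alpha^*_2(G/N)=\alpha^*_2(G)$, where $G/N$ carries the length $\overline{a}\mapsto\inf_{g\in\overline{a}} l(g)$ induced from the word length $l$ of $G$ relative to a compact generating subset.
   Context: For a locally compact compactly generated group $H$ with word length metric $d$ relative to a compact generating subset, $\alpha^*_2(H)$ denotes its equivariant Hilbert space compression: the supremum of $r\in[0,1]$ such that there exist a continuous affine isometric action of $H$ on a Hilbert space with associated $1$-cocycle $b$ (i.e. $b(h)$ is the image of $0$ under $h$) and constants $C,D>0$ with $\frac1C d(g,h)^r-D\leq\|b(g)-b(h)\|\leq C d(g,h)$ for all $g,h\in H$. *)

theory Defs
  imports "HOL-Analysis.Analysis"
begin

text \<open>Groups are written additively (class group_add, not assumed commutative):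
  the group law is +, the identity is 0, inverses are given by uminus.\<close>

definition words :: "'a::group_add set \<Rightarrow> nat \<Rightarrow> 'a set" where
  "words S n = {sum_list xs | xs. length xs \<le> n \<and> set xs \<subseteq> S \<union> uminus ` S}"

definition generating_set :: "'a::group_add set \<Rightarrow> bool" where
  "generating_set S \<longleftrightarrow> (\<forall>g. \<exists>n. g \<in> words S n)"

definition word_length :: "'a::group_add set \<Rightarrow> 'a \<Rightarrow> real" where
  "word_length S g = real (LEAST n. g \<in> words S n)"

definition word_metric :: "'a::group_add set \<Rightarrow> 'a \<Rightarrow> 'a \<Rightarrow> real" where
  "word_metric S g h = word_length S (- g + h)"

definition affine_isometric_action ::
  "('g::{topological_space, group_add} \<Rightarrow> 'v::{real_inner, complete_space} \<Rightarrow> 'v) \<Rightarrow> bool" where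
  "affine_isometric_action A \<longleftrightarrow>
     (\<forall>g h. A (g + h) = A g \<circ> A h) \<and> A 0 = id \<and>
     (\<forall>g x y. dist (A g x) (A g y) = dist x y) \<and>
     (\<forall>x. continuous_on UNIV (\<lambda>g. A g x))"

text \<open>Equivariant Hilbert space compression of a group with metric d, computed with
  affine isometric actions on the Hilbert space type 'v; the cocycle is b(g) = A g 0.\<close>
definition equivariant_compression ::
  "('g::{topological_space, group_add} \<Rightarrow> 'g \<Rightarrow> real) \<Rightarrow> 'v::{real_inner, complete_space} itself \<Rightarrow> real" where
  "equivariant_compression d (_::'v itself) =
     Sup {r \<in> {0..1}. \<exists>A :: 'g \<Rightarrow> 'v \<Rightarrow> 'v. affine_isometric_action A \<and>
            (\<exists>C>0. \<exists>D>0. \<forall>g h.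
               d g h powr r / C - D \<le> norm (A g 0 - A h 0) \<and>
               norm (A g 0 - A h 0) \<le> C * d g h)}"

text \<open>Quotient length on G/N induced by the length l of G: inf of l over the coset,
  the quotient G/N being presented by the quotient map q.\<close>
definition quotient_metric ::
  "('g \<Rightarrow> real) \<Rightarrow> ('g \<Rightarrow> 'h::group_add) \<Rightarrow> 'h \<Rightarrow> 'h \<Rightarrow> real" where
  "quotient_metric l q x y = Inf {l g | g. q g = - x + y}"

end

theory Submission
  imports Defs "HOL-Real_Asymp.Real_Asymp"
begin

(* The quotient length on G/N and the word length on G differ by at most a constant, because by
   Baire category the compact set N has bounded word length. Hence pulling an action of G/N back
   to G preserves compression exponents. Conversely, the compact normal subgroup N fixes a point
   of the Hilbert space (the circumcentre of an orbit), so its fixed-point set is a nonempty closed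
   affine subspace invariant under G. Acting on it as before and trivially in the orthogonal
   directions gives an action that factors through G/N, whose cocycle differs from the original one
   by a bounded amount. *)

section \<open>Word length\<close>

lemma words_0 [simp]: "words S 0 = {0}"
  unfolding words_def by auto

lemma words_add: "a \<in> words S m \<Longrightarrow> b \<in> words S n \<Longrightarrow> a + b \<in> words S (m + n)"
  unfolding words_def
proof clarify
  fix xs ys assume "length xs \<le> m" "length ys \<le> n"
    "set xs \<subseteq> S \<union> uminus ` S" "set ys \<subseteq> S \<union> uminus ` S"
  then show "\<exists>zs. sum_list xs + sum_list ys = sum_list zs \<and> length zs \<le> m + n \<and> set zs \<subseteq> S \<union> uminus ` S"
    by (intro exI[of _ "xs @ ys"]) auto
qed

lemma words_uminus: "a \<in> words S m \<Longrightarrow> - a \<in> words S m"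
  unfolding words_def
proof clarify
  fix xs assume "length xs \<le> m" "set xs \<subseteq> S \<union> uminus ` S"
  moreover have "- sum_list xs = sum_list (rev (map uminus xs))"
    by (induction xs) (auto simp: minus_add)
  ultimately show "\<exists>zs. - sum_list xs = sum_list zs \<and> length zs \<le> m \<and> set zs \<subseteq> S \<union> uminus ` S"
    by (intro exI[of _ "rev (map uminus xs)"]) auto
qed

lemma words_Suc: "words S (Suc m) = insert 0 ((\<lambda>(s, w). s + w) ` ((S \<union> uminus ` S) \<times> words S m))"
proof (intro equalityI subsetI)
  fix g assume "g \<in> words S (Suc m)"
  then obtain xs where xs: "g = sum_list xs" "length xs \<le> Suc m" "set xs \<subseteq> S \<union> uminus ` S"
    unfolding words_def by auto
  show "g \<in> insert 0 ((\<lambda>(s, w). s + w) ` ((S \<union> uminus ` S) \<times> words S m))"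
  proof (cases xs)
    case (Cons y ys)
    then have "sum_list ys \<in> words S m" using xs unfolding words_def by auto
    then show ?thesis using xs Cons by (auto intro!: image_eqI[of _ _ "(y, sum_list ys)"])
  qed (use xs in simp)
next
  fix g assume "g \<in> insert 0 ((\<lambda>(s, w). s + w) ` ((S \<union> uminus ` S) \<times> words S m))"
  then consider "g = 0" | s w where "g = s + w" "s \<in> S \<union> uminus ` S" "w \<in> words S m" by auto
  then show "g \<in> words S (Suc m)"
  proof cases
    case 1
    then show ?thesis unfolding words_def by (auto intro!: exI[of _ "[]"])
  next
    case 2
    have "s \<in> words S 1" using 2 unfolding words_def by (auto intro!: exI[of _ "[s]"])
    from words_add[OF this 2(3)] show ?thesis using 2 by simp
  qed
qed

lemma compact_words:
  fixes S :: "'a::topological_group_add set"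
  assumes "compact S"
  shows "compact (words S m)"
proof (induction m)
  case (Suc m)
  have "compact (uminus ` S)"
    using assms by (intro compact_continuous_image continuous_intros)
  then have "compact ((S \<union> uminus ` S) \<times> words S m)"
    using assms Suc by (intro compact_Times compact_Un)
  then have "compact ((\<lambda>(s, w). s + w) ` ((S \<union> uminus ` S) \<times> words S m))"
    by (rule compact_continuous_image[rotated]) (auto intro!: continuous_intros simp: case_prod_unfold)
  then show ?case by (simp add: words_Suc)
qed simp

definition word_length_nat :: "'a::group_add set \<Rightarrow> 'a \<Rightarrow> nat" where
  "word_length_nat S g = (LEAST n. g \<in> words S n)"

lemma word_length_eq: "word_length S g = real (word_length_nat S g)"
  by (simp add: word_length_def word_length_nat_def)

lemma mem_words_word_length_nat: "generating_set S \<Longrightarrow> g \<in> words S (word_length_nat S g)"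
  unfolding generating_set_def word_length_nat_def by (metis LeastI)

lemma word_length_nat_le: "g \<in> words S n \<Longrightarrow> word_length_nat S g \<le> n"
  unfolding word_length_nat_def by (rule Least_le)

lemma word_length_nat_add:
  "generating_set S \<Longrightarrow> word_length_nat S (a + b) \<le> word_length_nat S a + word_length_nat S b"
  by (intro word_length_nat_le words_add mem_words_word_length_nat)

lemma word_length_nat_eq_0_iff: "generating_set S \<Longrightarrow> word_length_nat S a = 0 \<longleftrightarrow> a = 0"
  using mem_words_word_length_nat[of S a] word_length_nat_le[of 0 S 0] by auto

text \<open>By Baire category some words S m has nonempty interior, and finitely many translates of
  that interior cover K.\<close>
lemma bounded_word_length_on_compact:
  fixes S K :: "'g::{topological_group_add, t2_space} set"
  assumes lc: "locally_compact_space (euclidean :: 'g topology)"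
    and S: "compact S" "generating_set S" and K: "compact K"
  shows "\<exists>M. \<forall>g\<in>K. word_length_nat S g \<le> M"
proof -
  have "regular_space (euclidean :: 'g topology)"
    using locally_compact_Hausdorff_imp_regular_space[OF lc] hausdorff
    unfolding Hausdorff_space_def disjnt_def by fastforce
  moreover have "\<Union>(range (words S)) = UNIV"
    using mem_words_word_length_nat[OF S(2)] by blast
  ultimately have "\<exists>m. interior (words S m) \<noteq> {}"
    using Baire_category_alt[of euclidean "range (words S)"] lc
    by (auto intro: compact_imp_closed compact_words S)
  then obtain m u where u: "u \<in> interior (words S m)" by blast
  define V where "V g = (\<lambda>y. u + (- g + y)) -` interior (words S m)" for g
  have "open (V g)" for g
    unfolding V_def by (intro open_vimage open_interior continuous_intros)
  moreover have "K \<subseteq> (\<Union>g\<in>K. V g)"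
    using u by (auto simp: V_def)
  ultimately obtain G where G: "G \<subseteq> K" "finite G" "K \<subseteq> (\<Union>g\<in>G. V g)"
    using compactE_image[OF K, of K V] by metis
  have "word_length_nat S k \<le> (\<Sum>g\<in>G. word_length_nat S g) + (m + m)" if "k \<in> K" for k
  proof -
    obtain g where g: "g \<in> G" "u + (- g + k) \<in> words S m"
      using G(3) \<open>k \<in> K\<close> interior_subset unfolding V_def by blast
    have "- u \<in> words S m" using u interior_subset words_uminus by blast
    from words_add[OF this g(2)] have "- g + k \<in> words S (m + m)"
      by (simp only: minus_add_cancel)
    from words_add[OF mem_words_word_length_nat[OF S(2), of g] this]
    have "word_length_nat S k \<le> word_length_nat S g + (m + m)"
      by (simp add: add.assoc[symmetric] word_length_nat_le)
    also have "word_length_nat S g \<le> (\<Sum>g\<in>G. word_length_nat S g)"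
      using G g by (intro member_le_sum) auto
    finally show ?thesis by simp
  qed
  then show ?thesis by blast
qed

lemma additive_map_zero:
  fixes q :: "'a::group_add \<Rightarrow> 'b::group_add"
  assumes "\<And>a b. q (a + b) = q a + q b"
  shows "q 0 = 0"
proof -
  have "q 0 + q 0 = q 0 + 0" using assms[of 0 0] by simp
  then show ?thesis by (rule add_left_imp_eq)
qed

lemma additive_map_uminus:
  fixes q :: "'a::group_add \<Rightarrow> 'b::group_add"
  assumes "\<And>a b. q (a + b) = q a + q b"
  shows "q (- a) = - q a"
  using assms[of a "- a"] additive_map_zero[OF assms] by (simp add: minus_unique)

lemma word_metric_nonneg: "0 \<le> word_metric S g h"
  by (simp add: word_metric_def word_length_eq)

lemma word_metric_ge_1:
  assumes "generating_set S" "g \<noteq> h"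
  shows "1 \<le> word_metric S g h"
proof -
  have "- g + h \<noteq> 0"
  proof
    assume "- g + h = 0"
    then have "g + (- g + h) = g" by simp
    then show False using assms(2) by simp
  qed
  then have "word_length_nat S (- g + h) \<noteq> 0" using word_length_nat_eq_0_iff[OF assms(1)] by blast
  then show ?thesis by (simp add: word_metric_def word_length_eq)
qed

lemma quotient_metric_word_length_attained:
  fixes q :: "'g::group_add \<Rightarrow> 'h::group_add"
  assumes "surj q"
  shows "\<exists>g. q g = - x + y \<and> quotient_metric (word_length S) q x y = word_length S g"
proof -
  define z where "z = - x + y"
  define m where "m = (LEAST m. \<exists>g. q g = z \<and> word_length_nat S g = m)"
  have "\<exists>m g. q g = z \<and> word_length_nat S g = m" using assms by (metis surjD)
  from LeastI_ex[OF this] obtain g where g: "q g = z" "word_length_nat S g = m"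
    unfolding m_def by blast
  have g_min: "word_length_nat S g \<le> word_length_nat S h" if "q h = z" for h
    unfolding g(2) m_def using that by (intro Least_le) blast
  have "Inf {word_length S g | g. q g = z} = word_length S g"
    using g g_min by (intro cInf_eq_minimum) (auto simp: word_length_eq)
  then show ?thesis using g unfolding quotient_metric_def z_def by auto
qed

lemma quotient_metric_word_length_nonneg:
  fixes q :: "'g::group_add \<Rightarrow> 'h::group_add"
  assumes "surj q"
  shows "0 \<le> quotient_metric (word_length S) q x y"
  using quotient_metric_word_length_attained[OF assms, of x y S] by (auto simp: word_length_eq)

lemma quotient_metric_le_word_metric:
  fixes q :: "'g::group_add \<Rightarrow> 'h::group_add"
  assumes "\<And>a b. q (a + b) = q a + q b"
  shows "quotient_metric (word_length S) q (q a) (q b) \<le> word_metric S a b"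
  unfolding quotient_metric_def word_metric_def
proof (rule cInf_lower)
  have "q (- a + b) = - q a + q b" by (simp add: assms additive_map_uminus[OF assms])
  then show "word_length S (- a + b) \<in> {word_length S g | g. q g = - q a + q b}" by blast
  show "bdd_below {word_length S g | g. q g = - q a + q b}"
    by (rule bdd_belowI[of _ 0]) (auto simp: word_length_eq)
qed

lemma word_metric_le_quotient_metric:
  fixes q :: "'g::group_add \<Rightarrow> 'h::group_add"
  assumes hom: "\<And>a b. q (a + b) = q a + q b" and "surj q" and S: "generating_set S"
    and M: "\<And>n. q n = 0 \<Longrightarrow> word_length_nat S n \<le> M"
  shows "word_metric S a b \<le> quotient_metric (word_length S) q (q a) (q b) + M"
proof -
  obtain g where g: "q g = - q a + q b" "quotient_metric (word_length S) q (q a) (q b) = word_length S g"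
    using quotient_metric_word_length_attained[OF \<open>surj q\<close>] by blast
  define n where "n = - g + (- a + b)"
  have "q n = 0" using g(1) by (simp add: n_def hom additive_map_uminus[OF hom])
  have "- a + b = g + n" unfolding n_def by (simp only: add_minus_cancel)
  then have "word_length_nat S (- a + b) \<le> word_length_nat S g + M"
    using word_length_nat_add[OF S, of g n] M[OF \<open>q n = 0\<close>] by simp
  then show ?thesis using g(2) by (simp add: word_metric_def word_length_eq)
qed

lemma quotient_metric_lift:
  fixes q :: "'g::group_add \<Rightarrow> 'h::group_add"
  assumes hom: "\<And>a b. q (a + b) = q a + q b" and "surj q"
  shows "\<exists>a b. q a = x \<and> q b = y \<and> word_metric S a b = quotient_metric (word_length S) q x y"
proof -
  obtain g where g: "q g = - x + y" "quotient_metric (word_length S) q x y = word_length S g"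
    using quotient_metric_word_length_attained[OF \<open>surj q\<close>] by blast
  obtain a where a: "q a = x" using surjD[OF \<open>surj q\<close>, of x] by auto
  have "q (a + g) = y" using a g(1) by (simp add: hom add.assoc[symmetric])
  moreover have "word_metric S a (a + g) = quotient_metric (word_length S) q x y"
    using g(2) by (simp add: word_metric_def)
  ultimately show ?thesis using a by blast
qed

section \<open>Convex minimisation and isometries in Hilbert space\<close>

lemma dist_midpoint_sq:
  fixes x y z :: "'v::real_inner"
  shows "(dist (midpoint x y) z)\<^sup>2 = (dist x z)\<^sup>2 / 2 + (dist y z)\<^sup>2 / 2 - (dist x y)\<^sup>2 / 4"
  unfolding dist_norm power2_norm_eq_inner midpoint_def
  by (simp add: inner_simps inner_commute algebra_simps) (simp add: field_simps)

lemma midpoint_mem_convex: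
  assumes "convex K" "x \<in> K" "y \<in> K"
  shows "midpoint x y \<in> K"
  using convexD[OF assms, of "1/2" "1/2"] by (simp add: midpoint_def scaleR_add_right)

text \<open>By the parallelogram law this holds for the distance to a point and for sup_dist X.\<close>
definition midconvex_sq_on :: "'v::real_inner set \<Rightarrow> ('v \<Rightarrow> real) \<Rightarrow> bool" where
  "midconvex_sq_on K f \<longleftrightarrow> (\<forall>x\<in>K. \<forall>y\<in>K.
     (f (midpoint x y))\<^sup>2 \<le> (f x)\<^sup>2 / 2 + (f y)\<^sup>2 / 2 - (dist x y)\<^sup>2 / 4)"

lemma midconvex_sq_on_dist: "midconvex_sq_on K (dist z)"
  unfolding midconvex_sq_on_def by (simp add: dist_commute[of z] dist_midpoint_sq)

lemma Cauchy_if_dist_le_add: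
  fixes X :: "nat \<Rightarrow> 'a::metric_space"
  assumes "\<And>m n. dist (X m) (X n) \<le> e m + e n" and "e \<longlonglongrightarrow> 0"
  shows "Cauchy X"
proof (rule metric_CauchyI)
  fix \<epsilon> :: real assume "\<epsilon> > 0"
  then have "\<forall>\<^sub>F n in sequentially. e n < \<epsilon> / 2"
    using assms(2) by (intro order_tendstoD(2)) auto
  then obtain M where M: "\<And>n. n \<ge> M \<Longrightarrow> e n < \<epsilon> / 2"
    unfolding eventually_sequentially by blast
  have "dist (X m) (X n) < \<epsilon>" if "m \<ge> M" "n \<ge> M" for m n
    using assms(1)[of m n] M[OF that(1)] M[OF that(2)] by linarith
  then show "\<exists>M. \<forall>m\<ge>M. \<forall>n\<ge>M. dist (X m) (X n) < \<epsilon>" by blast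
qed

lemma midconvex_sq_on_dist_le:
  assumes "convex K" "midconvex_sq_on K f" "\<And>z. z \<in> K \<Longrightarrow> R \<le> f z" "0 \<le> R"
    and "x \<in> K" "y \<in> K"
  shows "(dist x y)\<^sup>2 \<le> 2 * ((f x)\<^sup>2 - R\<^sup>2) + 2 * ((f y)\<^sup>2 - R\<^sup>2)"
proof -
  have "R\<^sup>2 \<le> (f (midpoint x y))\<^sup>2"
    using assms(3)[OF midpoint_mem_convex[OF assms(1,5,6)]] assms(4) by (intro power_mono)
  also have "\<dots> \<le> (f x)\<^sup>2 / 2 + (f y)\<^sup>2 / 2 - (dist x y)\<^sup>2 / 4"
    using assms(2,5,6) unfolding midconvex_sq_on_def by blast
  finally show ?thesis by simp
qed

lemma midconvex_sq_on_attains_min: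
  fixes f :: "'v::{real_inner, complete_space} \<Rightarrow> real"
  assumes K: "closed K" "convex K" "K \<noteq> {}"
    and f: "continuous_on K f" "\<And>x. x \<in> K \<Longrightarrow> 0 \<le> f x" "midconvex_sq_on K f"
  shows "\<exists>x\<in>K. \<forall>y\<in>K. f x \<le> f y"
proof -
  define R where "R = Inf (f ` K)"
  have bdd: "bdd_below (f ` K)" using f(2) by (auto simp: bdd_below_def)
  have R_le: "R \<le> f y" if "y \<in> K" for y
    unfolding R_def using that bdd by (intro cInf_lower) auto
  have R_nonneg: "0 \<le> R" unfolding R_def using K(3) f(2) by (intro cInf_greatest) auto
  have "\<exists>x\<in>K. (f x)\<^sup>2 < R\<^sup>2 + 1 / (real n + 1)" for n
  proof -
    have "Inf (f ` K) < sqrt (R\<^sup>2 + 1 / (real n + 1))"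
      using R_nonneg unfolding R_def[symmetric] by (simp add: real_less_rsqrt)
    then obtain x where x: "x \<in> K" "f x < sqrt (R\<^sup>2 + 1 / (real n + 1))"
      using cInf_less_iff[OF _ bdd] K(3) by auto
    then have "(f x)\<^sup>2 < (sqrt (R\<^sup>2 + 1 / (real n + 1)))\<^sup>2"
      using f(2) by (intro power_strict_mono) auto
    then show ?thesis using x(1) by auto
  qed
  then obtain X where X: "\<And>n. X n \<in> K" "\<And>n. (f (X n))\<^sup>2 < R\<^sup>2 + 1 / (real n + 1)"
    by metis
  define e where "e n = sqrt (2 / (real n + 1))" for n
  have "dist (X m) (X n) \<le> e m + e n" for m n
  proof -
    have "(dist (X m) (X n))\<^sup>2 \<le> 2 / (real m + 1) + 2 / (real n + 1)"
      using midconvex_sq_on_dist_le[OF K(2) f(3) R_le R_nonneg X(1) X(1), of m n] X(2)[of m] X(2)[of n]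
      by simp
    then have "dist (X m) (X n) \<le> sqrt (2 / (real m + 1) + 2 / (real n + 1))"
      by (simp add: real_le_rsqrt)
    also have "\<dots> \<le> e m + e n" unfolding e_def by (intro sqrt_add_le_add_sqrt) auto
    finally show ?thesis .
  qed
  moreover have "e \<longlonglongrightarrow> 0" unfolding e_def by real_asymp
  ultimately have "Cauchy X" by (rule Cauchy_if_dist_le_add)
  then obtain L where L: "X \<longlonglongrightarrow> L" using Cauchy_convergent_iff convergent_def by blast
  have "L \<in> K" using closed_sequentially[OF K(1)] X(1) L by blast
  have "(\<lambda>n. f (X n)) \<longlonglongrightarrow> f L"
    using continuous_on_tendsto_compose[OF f(1) L \<open>L \<in> K\<close>] X(1) by simp
  then have "(\<lambda>n. (f (X n))\<^sup>2) \<longlonglongrightarrow> (f L)\<^sup>2" by (rule tendsto_power)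
  moreover have "(\<lambda>n. R\<^sup>2 + 1 / (real n + 1)) \<longlonglongrightarrow> R\<^sup>2" by real_asymp
  ultimately have "(f L)\<^sup>2 \<le> R\<^sup>2" using X(2) by (intro LIMSEQ_le) (auto intro: less_imp_le)
  then have "f L \<le> R" using R_nonneg by (rule power2_le_imp_le)
  then show ?thesis using \<open>L \<in> K\<close> R_le by force
qed

lemma midconvex_sq_on_min_unique:
  assumes "convex K" "\<And>x. x \<in> K \<Longrightarrow> 0 \<le> f x" "midconvex_sq_on K f"
    and x: "x \<in> K" "\<forall>z\<in>K. f x \<le> f z" and y: "y \<in> K" "\<forall>z\<in>K. f y \<le> f z"
  shows "x = y"
proof -
  have "(dist x y)\<^sup>2 \<le> 2 * ((f x)\<^sup>2 - (f x)\<^sup>2) + 2 * ((f y)\<^sup>2 - (f x)\<^sup>2)"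
    by (rule midconvex_sq_on_dist_le[OF assms(1,3) _ assms(2)[OF x(1)] x(1) y(1)]) (use x in auto)
  moreover have "f x = f y" using x y by (simp add: order_antisym)
  ultimately have "(dist x y)\<^sup>2 \<le> 0" by simp
  then show ?thesis by simp
qed

definition sup_dist :: "'a::metric_space set \<Rightarrow> 'a \<Rightarrow> real" where
  "sup_dist X x = (SUP y\<in>X. dist x y)"

lemma dist_le_sup_dist:
  assumes "bounded X" "y \<in> X"
  shows "dist x y \<le> sup_dist X x"
proof -
  obtain e where "\<forall>z\<in>X. dist x z \<le> e" using assms(1) bounded_any_center by blast
  then show ?thesis unfolding sup_dist_def using assms(2) by (intro cSUP_upper bdd_aboveI2) auto
qed

lemma sup_dist_le: "X \<noteq> {} \<Longrightarrow> (\<And>y. y \<in> X \<Longrightarrow> dist x y \<le> M) \<Longrightarrow> sup_dist X x \<le> M"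
  unfolding sup_dist_def by (rule cSUP_least)

lemma sup_dist_nonneg:
  assumes "bounded X" "X \<noteq> {}"
  shows "0 \<le> sup_dist X x"
proof -
  obtain y where "y \<in> X" using assms(2) by blast
  then show ?thesis using dist_le_sup_dist[OF assms(1), of y x] zero_le_dist[of x y] by linarith
qed

lemma sup_dist_le_add_dist:
  assumes "bounded X" "X \<noteq> {}"
  shows "sup_dist X x \<le> sup_dist X x' + dist x x'"
proof (rule sup_dist_le[OF assms(2)])
  fix y assume "y \<in> X"
  have "dist x y \<le> dist x x' + dist x' y" by (rule dist_triangle)
  then show "dist x y \<le> sup_dist X x' + dist x x'"
    using dist_le_sup_dist[OF assms(1) \<open>y \<in> X\<close>, of x'] by linarith
qed

lemma continuous_on_sup_dist:
  assumes "bounded X" "X \<noteq> {}"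
  shows "continuous_on K (sup_dist X)"
proof (rule lipschitz_on_continuous_on)
  show "1-lipschitz_on K (sup_dist X)"
  proof (rule lipschitz_onI)
    fix x x' 
    show "dist (sup_dist X x) (sup_dist X x') \<le> 1 * dist x x'"
      using sup_dist_le_add_dist[OF assms, of x x'] sup_dist_le_add_dist[OF assms, of x' x]
      by (simp add: dist_real_def dist_commute)
  qed simp
qed

lemma midconvex_sq_on_sup_dist:
  fixes X :: "'v::real_inner set"
  assumes "bounded X" "X \<noteq> {}"
  shows "midconvex_sq_on K (sup_dist X)"
  unfolding midconvex_sq_on_def
proof (intro ballI)
  fix x y
  define Q where "Q = (sup_dist X x)\<^sup>2 / 2 + (sup_dist X y)\<^sup>2 / 2 - (dist x y)\<^sup>2 / 4"
  have dist_sq_le: "(dist (midpoint x y) z)\<^sup>2 \<le> Q" if "z \<in> X" for z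
  proof -
    have "(dist x z)\<^sup>2 \<le> (sup_dist X x)\<^sup>2" "(dist y z)\<^sup>2 \<le> (sup_dist X y)\<^sup>2"
      using dist_le_sup_dist[OF assms(1) that] by (auto intro: power_mono)
    then show ?thesis unfolding Q_def dist_midpoint_sq by simp
  qed
  have "sup_dist X (midpoint x y) \<le> sqrt Q"
    using assms(2) dist_sq_le by (intro sup_dist_le) (auto intro: real_le_rsqrt)
  moreover have "0 \<le> Q" using assms(2) dist_sq_le by (meson ex_in_conv order_trans zero_le_power2)
  ultimately show "(sup_dist X (midpoint x y))\<^sup>2 \<le> Q"
    using sup_dist_nonneg[OF assms] by (metis power_mono real_sqrt_pow2)
qed

text \<open>The common fixed point is the circumcentre of X, the unique minimiser of sup_dist X.\<close>
lemma isometries_common_fixed_point: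
  fixes X :: "'v::{real_inner, complete_space} set"
  assumes "bounded X" "X \<noteq> {}"
  shows "\<exists>c. \<forall>T. (\<forall>x y. dist (T x) (T y) = dist x y) \<longrightarrow> X \<subseteq> T ` X \<longrightarrow> T c = c"
proof -
  obtain c where c: "\<forall>y. sup_dist X c \<le> sup_dist X y"
    using midconvex_sq_on_attains_min[of UNIV "sup_dist X"] assms
    by (auto simp: continuous_on_sup_dist midconvex_sq_on_sup_dist sup_dist_nonneg)
  have "T c = c" if T: "\<And>x y. dist (T x) (T y) = dist x y" and X: "X \<subseteq> T ` X" for T
  proof -
    have "sup_dist X (T c) \<le> sup_dist X c"
    proof (rule sup_dist_le[OF assms(2)])
      fix y assume "y \<in> X"
      then obtain x where "x \<in> X" "y = T x" using X by blast
      then show "dist (T c) y \<le> sup_dist X c" using T dist_le_sup_dist[OF assms(1)] by simp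
    qed
    then have "\<forall>y. sup_dist X (T c) \<le> sup_dist X y" using c order_trans by blast
    then show "T c = c"
      using midconvex_sq_on_min_unique[of UNIV "sup_dist X"] c assms
      by (simp add: midconvex_sq_on_sup_dist sup_dist_nonneg)
  qed
  then show ?thesis by blast
qed

lemma eq_affine_combination_if_dist:
  fixes a b z :: "'v::real_inner"
  assumes "(dist z a)\<^sup>2 = t\<^sup>2 * (dist a b)\<^sup>2" and "(dist z b)\<^sup>2 = (1 - t)\<^sup>2 * (dist a b)\<^sup>2"
  shows "z = (1 - t) *\<^sub>R a + t *\<^sub>R b"
proof -
  define v where "v = z - a"
  define e where "e = b - a"
  have vv: "v \<bullet> v = t\<^sup>2 * (e \<bullet> e)"
    using assms(1) unfolding v_def e_def dist_norm power2_norm_eq_inner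
    by (simp add: inner_simps inner_commute algebra_simps)
  have "(v - e) \<bullet> (v - e) = (1 - t)\<^sup>2 * (e \<bullet> e)"
    using assms(2) unfolding v_def e_def dist_norm power2_norm_eq_inner
    by (simp add: inner_simps inner_commute algebra_simps)
  then have "v \<bullet> e = t * (e \<bullet> e)"
    using vv by (simp add: inner_simps inner_commute power2_eq_square algebra_simps)
  then have "(v - t *\<^sub>R e) \<bullet> (v - t *\<^sub>R e) = 0"
    using vv by (simp add: inner_simps inner_commute power2_eq_square algebra_simps)
  then have "v = t *\<^sub>R e" by simp
  then show ?thesis unfolding v_def e_def by (simp add: algebra_simps)
qed

text \<open>A point is determined by its distances to two points of a line through it; hence
  isometries of an inner product space are affine.\<close>
lemma isometry_affine_combination:
  fixes T :: "'v::real_inner \<Rightarrow> 'v"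
  assumes T: "\<And>x y. dist (T x) (T y) = dist x y"
  shows "T ((1 - t) *\<^sub>R u + t *\<^sub>R w) = (1 - t) *\<^sub>R T u + t *\<^sub>R T w"
proof (rule eq_affine_combination_if_dist)
  let ?p = "(1 - t) *\<^sub>R u + t *\<^sub>R w"
  have "dist ?p u = norm (t *\<^sub>R (w - u))" "dist ?p w = norm ((1 - t) *\<^sub>R (u - w))"
    by (simp_all add: dist_norm algebra_simps)
  then have "dist ?p u = \<bar>t\<bar> * dist u w" "dist ?p w = \<bar>1 - t\<bar> * dist u w"
    by (simp_all add: dist_norm norm_minus_commute)
  then show "(dist (T ?p) (T u))\<^sup>2 = t\<^sup>2 * (dist (T u) (T w))\<^sup>2"
    "(dist (T ?p) (T w))\<^sup>2 = (1 - t)\<^sup>2 * (dist (T u) (T w))\<^sup>2"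
    by (simp_all add: T power_mult_distrib)
qed

lemma affine_fixed_points_isometries:
  fixes T :: "'i \<Rightarrow> 'v::real_inner \<Rightarrow> 'v"
  assumes "\<And>i x y. dist (T i x) (T i y) = dist x y"
  shows "affine {x. \<forall>i\<in>I. T i x = x}"
  unfolding affine_def
proof (intro ballI allI impI, clarify)
  fix x y :: 'v and u v :: real and i assume "u + v = 1" "\<forall>i\<in>I. T i x = x" "\<forall>i\<in>I. T i y = y" "i \<in> I"
  then show "T i (u *\<^sub>R x + v *\<^sub>R y) = u *\<^sub>R x + v *\<^sub>R y"
    using isometry_affine_combination[OF assms, of i v x y] by (simp add: eq_diff_eq[symmetric])
qed

lemma closest_point_orthogonal:
  fixes F :: "'v::real_inner set"
  assumes "affine F" "p \<in> F" "u \<in> F" "\<forall>w\<in>F. dist z p \<le> dist z w"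
  shows "orthogonal (z - p) (u - p)"
proof (rule ccontr)
  define a where "a = (z - p) \<bullet> (u - p)"
  define b where "b = (u - p) \<bullet> (u - p)"
  define t where "t = a / (b + 1)"
  assume "\<not> orthogonal (z - p) (u - p)"
  then have "t \<noteq> 0" "0 \<le> b" by (simp_all add: orthogonal_def a_def b_def t_def add_nonneg_eq_0_iff)
  have "(1 - t) *\<^sub>R p + t *\<^sub>R u \<in> F" using assms(1-3) unfolding affine_def by simp
  then have "(dist z p)\<^sup>2 \<le> (dist z ((1 - t) *\<^sub>R p + t *\<^sub>R u))\<^sup>2"
    using assms(4) by (intro power_mono) auto
  moreover have "z - ((1 - t) *\<^sub>R p + t *\<^sub>R u) = (z - p) - t *\<^sub>R (u - p)" by (simp add: algebra_simps)
  ultimately have "0 \<le> t * t * b - 2 * t * a"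
    unfolding a_def b_def dist_norm power2_norm_eq_inner
    by (simp add: inner_diff_left inner_diff_right inner_commute algebra_simps)
  moreover have "a = t * (b + 1)" using \<open>0 \<le> b\<close> by (simp add: t_def)
  ultimately have "0 \<le> - (t * t) * (b + 2)" by (simp add: algebra_simps)
  moreover have "0 < t * t * (b + 2)"
    using \<open>t \<noteq> 0\<close> \<open>0 \<le> b\<close> by (auto simp: zero_less_mult_iff linorder_neq_iff)
  ultimately show False by simp
qed

lemma orthogonal_projection_affine_exists:
  fixes F :: "'v::{real_inner, complete_space} set"
  assumes "closed F" "affine F" "F \<noteq> {}"
  shows "\<exists>P. \<forall>z. P z \<in> F \<and> (\<forall>u\<in>F. \<forall>w\<in>F. orthogonal (z - P z) (u - w))"
proof -
  have "\<exists>p\<in>F. \<forall>u\<in>F. \<forall>w\<in>F. orthogonal (z - p) (u - w)" for z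
  proof -
    obtain p where p: "p \<in> F" "\<forall>w\<in>F. dist z p \<le> dist z w"
      using midconvex_sq_on_attains_min[of F "dist z"] assms affine_imp_convex
      by (auto simp: midconvex_sq_on_dist continuous_on_dist)
    have "orthogonal (z - p) (u - w)" if "u \<in> F" "w \<in> F" for u w
      using closest_point_orthogonal[OF assms(2) p(1) that(1) p(2)]
        closest_point_orthogonal[OF assms(2) p(1) that(2) p(2)]
      by (simp add: orthogonal_def inner_diff_right)
    then show ?thesis using p(1) by blast
  qed
  then show ?thesis by metis
qed

lemma orthogonal_projection_add:
  assumes P: "\<forall>z. P z \<in> F \<and> (\<forall>u\<in>F. \<forall>w\<in>F. orthogonal (z - P z) (u - w))"
    and u: "u \<in> F" and v: "\<forall>x\<in>F. \<forall>y\<in>F. orthogonal v (x - y)"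
  shows "P (u + v) = u"
proof -
  have "orthogonal ((u - P (u + v)) + v) (u - P (u + v))"
    using P u by (simp add: algebra_simps)
  moreover have "orthogonal v (u - P (u + v))" using P u v by blast
  ultimately have "orthogonal (u - P (u + v)) (u - P (u + v))"
    using orthogonal_clauses(10) by fastforce
  then show ?thesis by (simp add: orthogonal_self)
qed

section \<open>Affine isometric actions\<close>

lemma affine_isometric_actionD:
  assumes "affine_isometric_action A"
  shows "A (g + h) x = A g (A h x)" "A 0 x = x" "dist (A g x) (A g y) = dist x y"
    "continuous_on UNIV (\<lambda>g. A g x)"
  using assms unfolding affine_isometric_action_def by auto

lemma affine_isometric_actionI:
  assumes "\<And>g h x. A (g + h) x = A g (A h x)" "\<And>x. A 0 x = x" "\<And>g x y. dist (A g x) (A g y) = dist x y"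
    "\<And>x. continuous_on UNIV (\<lambda>g. A g x)"
  shows "affine_isometric_action A"
  using assms unfolding affine_isometric_action_def by (auto simp: fun_eq_iff)

text \<open>B g acts as A g on F and trivially in the directions orthogonal to F.\<close>
lemma affine_isometric_action_extend:
  fixes A :: "'g::{topological_space, group_add} \<Rightarrow> 'v::{real_inner, complete_space} \<Rightarrow> 'v"
  assumes A: "affine_isometric_action A"
    and F: "closed F" "affine F" "F \<noteq> {}" and F_invariant: "\<And>g x. x \<in> F \<Longrightarrow> A g x \<in> F"
  shows "\<exists>B. affine_isometric_action B \<and> (\<forall>g. \<forall>x\<in>F. B g x = A g x) \<and>
    (\<forall>g. (\<forall>x\<in>F. A g x = x) \<longrightarrow> B g = id)"
proof -
  obtain P where P: "\<forall>z. P z \<in> F \<and> (\<forall>u\<in>F. \<forall>w\<in>F. orthogonal (z - P z) (u - w))"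
    using orthogonal_projection_affine_exists[OF F] by blast
  have P_F: "P z \<in> F" for z using P by blast
  have P_orth: "orthogonal ((x - P x) - (y - P y)) (u - w)" if "u \<in> F" "w \<in> F" for x y u w
    using orthogonal_clauses(10)[of "x - P x" "u - w" "y - P y"] P that by blast
  have P_id: "P u = u" if "u \<in> F" for u
    using orthogonal_projection_add[OF P that, of 0] by (simp add: orthogonal_clauses)
  define B where "B g x = A g (P x) + (x - P x)" for g x
  have "affine_isometric_action B"
  proof (rule affine_isometric_actionI)
    fix g h x
    have "P (A h (P x) + (x - P x)) = A h (P x)"
      using P F_invariant by (intro orthogonal_projection_add[OF P]) auto
    then show "B (g + h) x = B g (B h x)"
      by (simp add: B_def affine_isometric_actionD(1)[OF A])
  next
    fix g x y
    have "(dist (B g x) (B g y))\<^sup>2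
        = (norm ((A g (P x) - A g (P y)) + ((x - P x) - (y - P y))))\<^sup>2"
      by (simp add: B_def dist_norm algebra_simps)
    also have "\<dots> = (norm (A g (P x) - A g (P y)))\<^sup>2 + (norm ((x - P x) - (y - P y)))\<^sup>2"
      using P_orth P_F F_invariant by (intro norm_add_Pythagorean) (simp add: orthogonal_commute)
    also have "norm (A g (P x) - A g (P y)) = norm (P x - P y)"
      using affine_isometric_actionD(3)[OF A] by (simp add: dist_norm)
    also have "(norm (P x - P y))\<^sup>2 + (norm ((x - P x) - (y - P y)))\<^sup>2
        = (norm ((P x - P y) + ((x - P x) - (y - P y))))\<^sup>2"
      using P_orth P_F by (intro norm_add_Pythagorean[symmetric]) (simp add: orthogonal_commute)
    finally show "dist (B g x) (B g y) = dist x y"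
      by (simp add: dist_norm power2_eq_iff_nonneg)
  qed (use affine_isometric_actionD[OF A] in \<open>auto simp: B_def intro!: continuous_intros\<close>)
  moreover have "B g x = A g x" if "x \<in> F" for g x using that by (simp add: B_def P_id)
  moreover have "B g = id" if "\<forall>x\<in>F. A g x = x" for g using that P_F by (auto simp: B_def)
  ultimately show ?thesis by blast
qed

lemma dist_isometries_basepoint:
  assumes "\<And>x y. dist (S x) (S y) = dist x y" "\<And>x y. dist (T x) (T y) = dist x y"
  shows "\<bar>dist (S p) (T p) - dist (S q) (T q)\<bar> \<le> 2 * dist p q"
proof -
  have "dist (S p) (T p) \<le> dist (S p) (S q) + dist (S q) (T q) + dist (T q) (T p)"
    "dist (S q) (T q) \<le> dist (S q) (S p) + dist (S p) (T p) + dist (T p) (T q)"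
    by (meson add_mono_thms_linordered_semiring(3) dist_triangle order_trans)+
  then show ?thesis using assms by (simp add: dist_commute abs_le_iff)
qed

lemma isometry_continuous_on: "(\<And>x y. dist (T x) (T y) = dist x y) \<Longrightarrow> continuous_on S T"
  unfolding continuous_on_iff by metis

lemma affine_isometric_action_compact_subgroup_fixed_point:
  fixes A :: "'g::{topological_space, group_add} \<Rightarrow> 'v::{real_inner, complete_space} \<Rightarrow> 'v"
  assumes A: "affine_isometric_action A"
    and N: "compact N" "0 \<in> N" "\<And>a b. a \<in> N \<Longrightarrow> b \<in> N \<Longrightarrow> - a + b \<in> N"
  shows "\<exists>c. \<forall>n\<in>N. A n c = c"
proof -
  define X where "X = (\<lambda>n. A n 0) ` N"
  have "compact X"
    unfolding X_def using N(1) affine_isometric_actionD(4)[OF A]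
    by (intro compact_continuous_image) (auto intro: continuous_on_subset)
  moreover have "X \<noteq> {}" using N(2) unfolding X_def by blast
  ultimately obtain c
    where c: "\<forall>T. (\<forall>x y. dist (T x) (T y) = dist x y) \<longrightarrow> X \<subseteq> T ` X \<longrightarrow> T c = c"
    using isometries_common_fixed_point[OF compact_imp_bounded[OF \<open>compact X\<close>]] by blast
  have X_sub: "X \<subseteq> A n ` X" if "n \<in> N" for n
  proof
    fix y assume "y \<in> X"
    then obtain m where "m \<in> N" "y = A n (A (- n + m) 0)"
      unfolding X_def by (auto simp: affine_isometric_actionD(1)[OF A, symmetric] add.assoc[symmetric])
    then show "y \<in> A n ` X" using N(3) that unfolding X_def by blast
  qed
  have "A n c = c" if "n \<in> N" for n
    using c affine_isometric_actionD(3)[OF A] X_sub[OF that] by blast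
  then show ?thesis by blast
qed

lemma affine_isometric_action_trivial_on_compact_normal:
  fixes A :: "'g::{topological_space, group_add} \<Rightarrow> 'v::{real_inner, complete_space} \<Rightarrow> 'v"
  assumes A: "affine_isometric_action A"
    and N: "compact N" "0 \<in> N" "\<And>a b. a \<in> N \<Longrightarrow> b \<in> N \<Longrightarrow> - a + b \<in> N"
      "\<And>g n. n \<in> N \<Longrightarrow> - g + n + g \<in> N"
  shows "\<exists>B :: 'g \<Rightarrow> 'v \<Rightarrow> 'v. affine_isometric_action B \<and> (\<forall>n\<in>N. B n = id) \<and>
    (\<exists>E. \<forall>g h. \<bar>norm (B g 0 - B h 0) - norm (A g 0 - A h 0)\<bar> \<le> E)"
proof -
  note A_add = affine_isometric_actionD(1)[OF A] and A_iso = affine_isometric_actionD(3)[OF A]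
  obtain c where c: "\<And>n. n \<in> N \<Longrightarrow> A n c = c"
    using affine_isometric_action_compact_subgroup_fixed_point[OF A N(1-3)] by blast
  define F where "F = {x. \<forall>n\<in>N. A n x = x}"
  have "c \<in> F" using c by (simp add: F_def)
  have "closed F"
  proof -
    have "closed {x. A n x = x}" for n
      using isometry_continuous_on[OF A_iso] continuous_on_id by (rule closed_Collect_eq)
    moreover have "F = (\<Inter>n\<in>N. {x. A n x = x})" by (auto simp: F_def)
    ultimately show ?thesis by auto
  qed
  moreover have "affine F" unfolding F_def by (rule affine_fixed_points_isometries[OF A_iso])
  moreover have "F \<noteq> {}" using \<open>c \<in> F\<close> by blast
  moreover have "A g x \<in> F" if "x \<in> F" for g x
  proof -
    have "A n (A g x) = A g (A (- g + n + g) x)" for n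
      by (simp add: A_add[symmetric] add.assoc[symmetric])
    then show ?thesis using that N(4) by (simp add: F_def)
  qed
  ultimately obtain B where B: "affine_isometric_action B" "\<forall>g. \<forall>x\<in>F. B g x = A g x"
    "\<forall>g. (\<forall>x\<in>F. A g x = x) \<longrightarrow> B g = id"
    using affine_isometric_action_extend[OF A] by metis
  have B_cocycle: "\<bar>norm (B g 0 - B h 0) - norm (A g 0 - A h 0)\<bar> \<le> 4 * norm c" for g h
  proof -
    have "\<bar>dist (B g c) (B h c) - dist (B g 0) (B h 0)\<bar> \<le> 2 * dist c 0"
      by (intro dist_isometries_basepoint affine_isometric_actionD(3)[OF B(1)])
    moreover have "\<bar>dist (A g c) (A h c) - dist (A g 0) (A h 0)\<bar> \<le> 2 * dist c 0"
      by (intro dist_isometries_basepoint A_iso)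
    ultimately show ?thesis using B(2) \<open>c \<in> F\<close> by (simp add: dist_norm)
  qed
  have "B n = id" if "n \<in> N" for n using B(3) that by (simp add: F_def)
  then show ?thesis using B(1) B_cocycle by blast
qed

lemma affine_isometric_action_comp_hom:
  fixes q :: "'g::{topological_space, group_add} \<Rightarrow> 'h::{topological_space, group_add}"
  assumes A: "affine_isometric_action A" and hom: "\<And>a b. q (a + b) = q a + q b"
    and "continuous_on UNIV q"
  shows "affine_isometric_action (\<lambda>g. A (q g))"
proof (rule affine_isometric_actionI)
  fix x
  show "continuous_on UNIV (\<lambda>g. A (q g) x)"
    using continuous_on_compose2[OF affine_isometric_actionD(4)[OF A] \<open>continuous_on UNIV q\<close>] by simp
qed (simp_all add: hom additive_map_zero[OF hom] affine_isometric_actionD[OF A])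

lemma affine_isometric_action_descend:
  fixes q :: "'g::{topological_space, group_add} \<Rightarrow> 'h::{topological_space, group_add}"
    and B :: "'g \<Rightarrow> 'v::{real_inner, complete_space} \<Rightarrow> 'v"
  assumes B: "affine_isometric_action B" and hom: "\<And>a b. q (a + b) = q a + q b"
    and "surj q" and q_open: "\<And>U. open U \<Longrightarrow> open (q ` U)"
    and fibres: "\<And>a b. q a = q b \<Longrightarrow> B a = B b"
  shows "\<exists>A :: 'h \<Rightarrow> 'v \<Rightarrow> 'v. affine_isometric_action A \<and> (\<forall>g. A (q g) = B g)"
proof -
  define A where "A y = B (inv q y)" for y
  have q_inv: "q (inv q y) = y" for y by (simp add: surj_f_inv_f[OF \<open>surj q\<close>])
  have A_q: "A (q g) = B g" for g unfolding A_def by (rule fibres) (simp add: q_inv)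
  have "affine_isometric_action A"
  proof (rule affine_isometric_actionI)
    fix y z x
    have "A (y + z) = B (inv q y + inv q z)"
      using A_q[of "inv q y + inv q z"] by (simp add: hom q_inv)
    then show "A (y + z) x = A y (A z x)"
      by (simp add: A_def affine_isometric_actionD(1)[OF B])
  next
    fix x
    have "(\<lambda>y. A y x) -` W = q ` ((\<lambda>g. B g x) -` W)" for W
    proof (intro equalityI subsetI)
      fix y assume "y \<in> (\<lambda>y. A y x) -` W"
      then show "y \<in> q ` ((\<lambda>g. B g x) -` W)"
        by (intro image_eqI[of _ _ "inv q y"]) (auto simp: A_def q_inv)
    qed (auto simp: A_q)
    then show "continuous_on UNIV (\<lambda>y. A y x)"
      using affine_isometric_actionD(4)[OF B] q_open
      unfolding continuous_on_open_vimage[OF open_UNIV] by simp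
  qed (use A_q[of 0] additive_map_zero[OF hom] affine_isometric_actionD[OF B] in \<open>simp_all add: A_def\<close>)
  then show ?thesis using A_q by blast
qed

section \<open>Compression\<close>

definition compression_bounds ::
    "('g \<Rightarrow> 'g \<Rightarrow> real) \<Rightarrow> ('g \<Rightarrow> 'v::real_normed_vector) \<Rightarrow> real \<Rightarrow> bool" where
  "compression_bounds d b r \<longleftrightarrow> (\<exists>C>0. \<exists>D>0. \<forall>g h.
     d g h powr r / C - D \<le> norm (b g - b h) \<and> norm (b g - b h) \<le> C * d g h)"

definition has_compression_exponent ::
    "('g::{topological_space, group_add} \<Rightarrow> 'g \<Rightarrow> real) \<Rightarrow> 'v::{real_inner, complete_space} itself \<Rightarrow>
      real \<Rightarrow> bool" where
  "has_compression_exponent d (_::'v itself) r \<longleftrightarrow>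
     (\<exists>A :: 'g \<Rightarrow> 'v \<Rightarrow> 'v. affine_isometric_action A \<and> compression_bounds d (\<lambda>g. A g 0) r)"

lemma equivariant_compression_altdef:
  "equivariant_compression d TYPE('v::{real_inner, complete_space}) =
    Sup {r \<in> {0..1}. has_compression_exponent d TYPE('v) r}"
  unfolding equivariant_compression_def has_compression_exponent_def compression_bounds_def ..

lemma powr_le_if_le_add:
  fixes d e M r :: real
  assumes "0 \<le> d" "d \<le> e + M" "0 \<le> e" "0 \<le> M" "0 \<le> r" "r \<le> 1"
  shows "d powr r \<le> 2 * (e powr r + M powr r)"
proof -
  have "d powr r \<le> (2 * max e M) powr r" using assms by (intro powr_mono2) auto
  also have "\<dots> = 2 powr r * max e M powr r" using assms by (simp add: powr_mult)
  also have "\<dots> \<le> 2 * max e M powr r"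
    using powr_mono[of r 1 2] assms by (intro mult_right_mono) auto
  also have "max e M powr r \<le> e powr r + M powr r" by (cases "e \<le> M") (auto simp: max_def)
  finally show ?thesis by simp
qed

lemma compression_bounds_pullback:
  assumes b: "compression_bounds d' b r" and r: "0 \<le> r" "r \<le> 1"
    and d: "\<And>g h. 0 \<le> d' (q g) (q h)" "\<And>g h. d' (q g) (q h) \<le> d g h"
      "\<And>g h. d g h \<le> d' (q g) (q h) + M" "0 \<le> M"
  shows "compression_bounds d (\<lambda>g. b (q g)) r"
proof -
  obtain C D where CD: "C > 0" "D > 0" and
    bounds: "\<And>x y. d' x y powr r / C - D \<le> norm (b x - b y) \<and> norm (b x - b y) \<le> C * d' x y"
    using b unfolding compression_bounds_def by blast
  have "d g h powr r / (2 * C) - (D + M powr r / C) \<le> norm (b (q g) - b (q h)) \<and>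
      norm (b (q g) - b (q h)) \<le> 2 * C * d g h" for g h
  proof
    have "d g h powr r \<le> 2 * (d' (q g) (q h) powr r + M powr r)"
      by (rule powr_le_if_le_add[OF order_trans[OF d(1) d(2)] d(3) d(1) d(4) r])
    then show "d g h powr r / (2 * C) - (D + M powr r / C) \<le> norm (b (q g) - b (q h))"
      using bounds[of "q g" "q h"] CD by (simp add: field_simps)
    have "C * d' (q g) (q h) \<le> 2 * C * d g h"
      using CD d(1)[of g h] d(2)[of g h] by (simp add: mult_mono)
    then show "norm (b (q g) - b (q h)) \<le> 2 * C * d g h" using bounds[of "q g" "q h"] by linarith
  qed
  moreover have "0 < 2 * C" "0 < D + M powr r / C" using CD by (auto intro: add_pos_nonneg)
  ultimately show ?thesis unfolding compression_bounds_def by blast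
qed

lemma compression_bounds_perturb:
  assumes b: "compression_bounds d b r"
    and E: "\<And>g h. \<bar>norm (b' g - b' h) - norm (b g - b h)\<bar> \<le> E"
    and d: "\<And>g h. 0 \<le> d g h" "\<And>g h. g \<noteq> h \<Longrightarrow> 1 \<le> d g h"
  shows "compression_bounds d b' r"
proof -
  obtain C D where CD: "C > 0" "D > 0" and
    bounds: "\<And>x y. d x y powr r / C - D \<le> norm (b x - b y) \<and> norm (b x - b y) \<le> C * d x y"
    using b unfolding compression_bounds_def by blast
  have "0 \<le> E" using order_trans[OF abs_ge_zero E] .
  have "d g h powr r / (C + E) - (D + E) \<le> norm (b' g - b' h) \<and> norm (b' g - b' h) \<le> (C + E) * d g h"
    for g h
  proof
    have "d g h powr r / (C + E) \<le> d g h powr r / C"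
      using CD \<open>0 \<le> E\<close> by (intro divide_left_mono) auto
    then show "d g h powr r / (C + E) - (D + E) \<le> norm (b' g - b' h)"
      using bounds[of g h] E[of g h] by linarith
    show "norm (b' g - b' h) \<le> (C + E) * d g h"
    proof (cases "g = h")
      case False
      then have "E \<le> E * d g h" using mult_left_mono[OF d(2) \<open>0 \<le> E\<close>] by simp
      then have "C * d g h + E \<le> (C + E) * d g h" by (simp add: distrib_right)
      then show ?thesis using bounds[of g h] E[of g h] by linarith
    qed (use d(1) CD(1) \<open>0 \<le> E\<close> in \<open>simp add: zero_le_mult_iff\<close>)
  qed
  moreover have "0 < C + E" "0 < D + E" using CD \<open>0 \<le> E\<close> by auto
  ultimately show ?thesis unfolding compression_bounds_def by blast
qed

lemma compression_bounds_descend: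
  assumes "compression_bounds d (\<lambda>g. b (q g)) r"
    and lift: "\<And>x y. \<exists>g h. q g = x \<and> q h = y \<and> d g h = d' x y"
  shows "compression_bounds d' b r"
proof -
  obtain C D where CD: "C > 0" "D > 0" and
    bounds: "\<And>g h. d g h powr r / C - D \<le> norm (b (q g) - b (q h)) \<and> norm (b (q g) - b (q h)) \<le> C * d g h"
    using assms(1) unfolding compression_bounds_def by blast
  have "d' x y powr r / C - D \<le> norm (b x - b y) \<and> norm (b x - b y) \<le> C * d' x y" for x y
  proof -
    obtain g h where "q g = x" "q h = y" "d g h = d' x y" using lift by blast
    then show ?thesis using bounds[of g h] by simp
  qed
  then show ?thesis using CD unfolding compression_bounds_def by blast
qed

lemma has_compression_exponent_pullback:
  fixes q :: "'g::{topological_space, group_add} \<Rightarrow> 'h::{topological_space, group_add}"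
  assumes "has_compression_exponent d' TYPE('v::{real_inner, complete_space}) r" and r: "0 \<le> r" "r \<le> 1"
    and hom: "\<And>a b. q (a + b) = q a + q b" and "continuous_on UNIV q"
    and d: "\<And>g h. 0 \<le> d' (q g) (q h)" "\<And>g h. d' (q g) (q h) \<le> d g h"
      "\<And>g h. d g h \<le> d' (q g) (q h) + M" "0 \<le> M"
  shows "has_compression_exponent d TYPE('v) r"
proof -
  obtain A :: "'h \<Rightarrow> 'v \<Rightarrow> 'v" where A: "affine_isometric_action A" "compression_bounds d' (\<lambda>y. A y 0) r"
    using assms(1) unfolding has_compression_exponent_def by blast
  have "affine_isometric_action (\<lambda>g. A (q g))"
    by (rule affine_isometric_action_comp_hom[OF A(1) hom \<open>continuous_on UNIV q\<close>])
  moreover have "compression_bounds d (\<lambda>g. A (q g) 0) r"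
    using compression_bounds_pullback[where q = q, OF A(2) r d] by simp
  ultimately show ?thesis unfolding has_compression_exponent_def by blast
qed

lemma has_compression_exponent_quotient:
  fixes q :: "'g::{topological_space, group_add} \<Rightarrow> 'h::{topological_space, group_add}"
  assumes "has_compression_exponent d TYPE('v::{real_inner, complete_space}) r"
    and hom: "\<And>a b. q (a + b) = q a + q b" and "surj q" and "\<And>U. open U \<Longrightarrow> open (q ` U)"
    and "compact {g. q g = 0}"
    and d: "\<And>g h. 0 \<le> d g h" "\<And>g h. g \<noteq> h \<Longrightarrow> 1 \<le> d g h"
    and lift: "\<And>x y. \<exists>g h. q g = x \<and> q h = y \<and> d g h = d' x y"
  shows "has_compression_exponent d' TYPE('v) r"
proof -
  obtain A :: "'g \<Rightarrow> 'v \<Rightarrow> 'v" where A: "affine_isometric_action A" "compression_bounds d (\<lambda>g. A g 0) r"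
    using assms(1) unfolding has_compression_exponent_def by blast
  have "q 0 = 0" "\<And>a b. q a = 0 \<Longrightarrow> q b = 0 \<Longrightarrow> q (- a + b) = 0"
    "\<And>g n. q n = 0 \<Longrightarrow> q (- g + n + g) = 0"
    by (simp_all add: hom additive_map_zero[OF hom] additive_map_uminus[OF hom])
  then obtain B :: "'g \<Rightarrow> 'v \<Rightarrow> 'v" and E
    where B: "affine_isometric_action B" "\<And>n. q n = 0 \<Longrightarrow> B n = id"
      "\<And>g h. \<bar>norm (B g 0 - B h 0) - norm (A g 0 - A h 0)\<bar> \<le> E"
    using affine_isometric_action_trivial_on_compact_normal[OF A(1) \<open>compact {g. q g = 0}\<close>] by auto
  have "B a = B b" if "q a = q b" for a b
  proof -
    have "q (- a + b) = 0" using that by (simp add: hom additive_map_uminus[OF hom])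
    then show ?thesis using B(2) affine_isometric_actionD(1)[OF B(1), of a "- a + b"]
      by (auto simp: add.assoc[symmetric] fun_eq_iff)
  qed
  then obtain A' :: "'h \<Rightarrow> 'v \<Rightarrow> 'v" where A': "affine_isometric_action A'" "\<And>g. A' (q g) = B g"
    using affine_isometric_action_descend[OF B(1) hom assms(3,4)] by blast
  have "compression_bounds d (\<lambda>g. A' (q g) 0) r"
    using compression_bounds_perturb[OF A(2) B(3) d] by (simp add: A'(2))
  then have "compression_bounds d' (\<lambda>y. A' y 0) r" using lift by (rule compression_bounds_descend)
  then show ?thesis using A'(1) unfolding has_compression_exponent_def by blast
qed

theorem lemma4p2:
  fixes S N :: "'g::{topological_group_add, t2_space} set"
    and q :: "'g \<Rightarrow> 'h::topological_group_add"
  assumes "locally_compact_space (euclidean :: 'g topology)"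
    and "compact S" and "generating_set S"
    and "compact N"
    and "\<And>a b. q (a + b) = q a + q b"
    and "continuous_on UNIV q" and "surj q"
    and "\<And>U. open U \<Longrightarrow> open (q ` U)"
    and "{g. q g = 0} = N"
  shows "equivariant_compression (quotient_metric (word_length S) q) TYPE('v::{real_inner, complete_space})
       = equivariant_compression (word_metric S) TYPE('v)"
proof -
  obtain M where M: "\<And>n. q n = 0 \<Longrightarrow> word_length_nat S n \<le> M"
    using bounded_word_length_on_compact[OF assms(1-4)] assms(9) by blast
  have "has_compression_exponent (quotient_metric (word_length S) q) TYPE('v) r \<longleftrightarrow>
      has_compression_exponent (word_metric S) TYPE('v) r" if "0 \<le> r" "r \<le> 1" for r
  proof
    assume "has_compression_exponent (quotient_metric (word_length S) q) TYPE('v) r"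
    then show "has_compression_exponent (word_metric S) TYPE('v) r"
      using that assms(5,6)
      by (rule has_compression_exponent_pullback[where M = "real M"])
        (auto intro: quotient_metric_word_length_nonneg[OF assms(7)]
          quotient_metric_le_word_metric[OF assms(5)] word_metric_le_quotient_metric[OF assms(5,7,3) M])
  next
    assume "has_compression_exponent (word_metric S) TYPE('v) r"
    then show "has_compression_exponent (quotient_metric (word_length S) q) TYPE('v) r"
      by (rule has_compression_exponent_quotient[OF _ assms(5,7,8) assms(4)[folded assms(9)]])
        (use quotient_metric_lift[OF assms(5,7)] in
          \<open>auto intro: word_metric_nonneg word_metric_ge_1[OF assms(3)]\<close>)
  qed
  then show ?thesis unfolding equivariant_compression_altdef by (metis atLeastAtMost_iff)
qed

end
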